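(* Let $\mathcal F$ be a filtration sequence, $r=(r_m)_{m\in\mathbb N}$ an extended integer sequence, and $E=(E_{m,n})_{m,n\in\mathbb N}$ an $r$-asymptotic e-process for $\mathcal P$ and $\mathcal F$. Then for every $\alpha\in(0,1)$, $$\limsup_{m\to\infty}\sup_{P\in\mathcal P}P\Big[\sup_{n\in\mathbb N,\ n\le r_m}E_{m,n}\ge \tfrac1\alpha\Big]\le\alpha .$$
   Context: $(\Omega,\mathcal A)$ is a measurable space, $\mathcal P$ a set of probability measures on it, $\mathbb N=\{0,1,\dots\}$; extended integers are elements of $\mathbb N\cup\{\infty\}$. Nonnegative random variables take values in $[0,\infty]$ with $\mathbb E_P[X]:=\infty$ if not $P$-integrable; $X_\infty:=\limsup_nX_n$. A filtration sequence is a family $(\mathcal F_{m,n})_{m,n\in\mathbb N}$ of sub-$\sigma$-algebras with each $\mathcal F_{m,\bullet}$ a filtration; adapted means $E_{m,n}$ is $\mathcal F_{m,n}$-measurable. For a filtration $\mathcal G$ and $\rho\in\mathbb N\cup\{\infty\}$, $\mathcal T(\rho,\mathcal G,\mathcal P)$ is the set of $\mathcal G$-stopping times $\tau$ (values in $\mathbb N\cup\{\infty\}$) with $P[\tau\le\rho]=1$ for all $P\in\mathcal P$; $\mathcal T(r,\mathcal F,\mathcal P)$ is the set of sequences $(\tau_m)$ with $\tau_m\in\mathcal T(r_m,\mathcal F_{m,\bullet},\mathcal P)$. A nonnegative adapted $E$ is an $r$-asymptotic e-process if for every $\tau\in\mathcal T(r,\mathcal F,\mathcal P)$, $\limsup_m\sup_{P\in\mathcal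 P}\mathbb E_P[E_{m,\tau_m}]\le 1$. *)

theory Defs
  imports "HOL-Probability.Probability" "HOL-Library.Extended_Nat"
begin

definition prob_measures_on :: "'a measure \<Rightarrow> 'a measure set \<Rightarrow> bool" where
  "prob_measures_on M Ps \<longleftrightarrow> (\<forall>P\<in>Ps. prob_space P \<and> sets P = sets M)"

definition filtration_sequence :: "'a measure \<Rightarrow> (nat \<Rightarrow> nat \<Rightarrow> 'a measure) \<Rightarrow> bool" where
  "filtration_sequence M F \<longleftrightarrow>
     (\<forall>m n. subalgebra M (F m n)) \<and>
     (\<forall>m n n'. n \<le> n' \<longrightarrow> sets (F m n) \<subseteq> sets (F m n'))"

definition adapted_seq :: "(nat \<Rightarrow> nat \<Rightarrow> 'a measure) \<Rightarrow> (nat \<Rightarrow> nat \<Rightarrow> 'a \<Rightarrow> ennreal) \<Rightarrow> bool" where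
  "adapted_seq F E \<longleftrightarrow> (\<forall>m n. E m n \<in> borel_measurable (F m n))"

definition stopping_times_bounded ::
  "'a measure \<Rightarrow> enat \<Rightarrow> (nat \<Rightarrow> 'a measure) \<Rightarrow> 'a measure set \<Rightarrow> ('a \<Rightarrow> enat) set" where
  "stopping_times_bounded M \<rho> G Ps =
     {\<tau>. (\<forall>n. {\<omega>\<in>space M. \<tau> \<omega> \<le> enat n} \<in> sets (G n)) \<and>
          (\<forall>P\<in>Ps. AE \<omega> in P. \<tau> \<omega> \<le> \<rho>)}"

definition stopping_time_seqs ::
  "'a measure \<Rightarrow> (nat \<Rightarrow> enat) \<Rightarrow> (nat \<Rightarrow> nat \<Rightarrow> 'a measure) \<Rightarrow> 'a measure set \<Rightarrow> (nat \<Rightarrow> 'a \<Rightarrow> enat) set" where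
  "stopping_time_seqs M r F Ps = {\<tau>. \<forall>m. \<tau> m \<in> stopping_times_bounded M (r m) (F m) Ps}"

definition stopped_at :: "(nat \<Rightarrow> 'a \<Rightarrow> ennreal) \<Rightarrow> ('a \<Rightarrow> enat) \<Rightarrow> 'a \<Rightarrow> ennreal" where
  "stopped_at X \<tau> \<omega> = (case \<tau> \<omega> of enat n \<Rightarrow> X n \<omega> | \<infinity> \<Rightarrow> limsup (\<lambda>n. X n \<omega>))"

(* r-asymptotic e-process; expectations are nonnegative integrals (= infinity if not integrable). *)
definition asymptotic_e_process ::
  "'a measure \<Rightarrow> 'a measure set \<Rightarrow> (nat \<Rightarrow> nat \<Rightarrow> 'a measure) \<Rightarrow> (nat \<Rightarrow> enat) \<Rightarrow>
   (nat \<Rightarrow> nat \<Rightarrow> 'a \<Rightarrow> ennreal) \<Rightarrow> bool" where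
  "asymptotic_e_process M Ps F r E \<longleftrightarrow>
     adapted_seq F E \<and>
     (\<forall>\<tau>\<in>stopping_time_seqs M r F Ps.
        limsup (\<lambda>m. SUP P\<in>Ps. (\<integral>\<^sup>+ \<omega>. stopped_at (E m) (\<tau> m) \<omega> \<partial>P)) \<le> 1)"

end

theory Submission
  imports Defs
begin

text \<open>A Ville-type inequality, proved by stopping at a first exceedance. Fix a level
c < 1/\<alpha> and stop E m at the first time it exceeds c, capped at r m. This is an admissible
stopping time \<tau> m, and on the event that sup {E m n | n \<le> r m} \<ge> 1/\<alpha> the stopped value
exceeds c. Markov's inequality bounds the probability of that event by the expectation of the
stopped value divided by c, so by the e-process property its limsup is at most 1/c; letting c
increase to 1/\<alpha> gives \<alpha>. The level must be strictly below 1/\<alpha> because the supremum need not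
be attained.\<close>

lemma Limsup_ennreal_mult_left:
  fixes c :: ennreal
  assumes "c \<noteq> \<infinity>" and "F \<noteq> bot"
  shows "Limsup F (\<lambda>x. c * g x) = c * Limsup F g"
proof (rule Limsup_compose_continuous_mono[where f = "(*) c"])
  show "continuous_on UNIV ((*) c)"
    using assms(1) by (intro ennreal_continuous_on_cmult continuous_on_id) (simp add: top.not_eq_extremum)
  show "mono ((*) c)"
    by (auto simp: mono_def mult_left_mono)
qed (rule assms(2))

lemma cmult_emeasure_le_nn_integral:
  assumes "A \<in> sets M" and "\<And>x. x \<in> A \<Longrightarrow> c \<le> f x"
  shows "c * emeasure M A \<le> (\<integral>\<^sup>+ x. f x \<partial>M)"
proof -
  have "c * emeasure M A = (\<integral>\<^sup>+ x. c * indicator A x \<partial>M)"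
    using assms(1) by (simp add: nn_integral_cmult_indicator)
  also have "\<dots> \<le> (\<integral>\<^sup>+ x. f x \<partial>M)"
    using assms(2) by (intro nn_integral_mono) (auto split: split_indicator)
  finally show ?thesis .
qed

definition first_exceedance :: "'b::linorder \<Rightarrow> (nat \<Rightarrow> 'a \<Rightarrow> 'b) \<Rightarrow> 'a \<Rightarrow> enat" where
  "first_exceedance c X \<omega> = (if \<exists>n. c < X n \<omega> then enat (LEAST n. c < X n \<omega>) else \<infinity>)"

lemma first_exceedance_le_iff:
  "first_exceedance c X \<omega> \<le> enat n \<longleftrightarrow> (\<exists>k\<le>n. c < X k \<omega>)"
proof
  assume le: "first_exceedance c X \<omega> \<le> enat n"
  then have ex: "\<exists>k. c < X k \<omega>"
    by (auto simp: first_exceedance_def split: if_splits)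
  then have "(LEAST k. c < X k \<omega>) \<le> n"
    using le by (simp add: first_exceedance_def)
  then show "\<exists>k\<le>n. c < X k \<omega>"
    using LeastI_ex[OF ex] by blast
next
  assume "\<exists>k\<le>n. c < X k \<omega>"
  then obtain k where "k \<le> n" and "c < X k \<omega>" by blast
  then show "first_exceedance c X \<omega> \<le> enat n"
    using Least_le[of "\<lambda>k. c < X k \<omega>" k] by (auto simp: first_exceedance_def)
qed

lemma less_stopped_at_capped_first_exceedance:
  assumes "enat n \<le> \<rho>" and "c < X n \<omega>"
  shows "c < stopped_at X (\<lambda>\<omega>. min (first_exceedance c X \<omega>) \<rho>) \<omega>"
proof -
  define k where "k = (LEAST k. c < X k \<omega>)"
  have "c < X k \<omega>" and "k \<le> n"
    using assms(2) unfolding k_def by (auto intro: LeastI Least_le)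
  moreover have "first_exceedance c X \<omega> = enat k"
    using assms(2) by (auto simp: first_exceedance_def k_def)
  moreover have "enat k \<le> \<rho>"
    using \<open>k \<le> n\<close> assms(1) by (meson enat_ord_simps(1) order_trans)
  ultimately show ?thesis
    by (simp add: stopped_at_def min_def)
qed

lemma capped_first_exceedance_stopping_time:
  fixes X :: "nat \<Rightarrow> 'a \<Rightarrow> 'b::linorder_topology"
  assumes sub: "\<And>n. subalgebra M (G n)"
    and mono: "\<And>n n'. n \<le> n' \<Longrightarrow> sets (G n) \<subseteq> sets (G n')"
    and adapted: "\<And>n. X n \<in> borel_measurable (G n)"
  shows "(\<lambda>\<omega>. min (first_exceedance c X \<omega>) \<rho>) \<in> stopping_times_bounded M \<rho> G Ps"
  unfolding stopping_times_bounded_def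
proof (intro CollectI conjI allI ballI)
  fix n
  have space: "space (G k) = space M" for k
    using sub by (simp add: subalgebra_def)
  have "{\<omega>\<in>space M. min (first_exceedance c X \<omega>) \<rho> \<le> enat n} =
      (\<Union>k\<le>n. {\<omega>\<in>space (G k). c < X k \<omega>}) \<union> (if \<rho> \<le> enat n then space (G n) else {})"
    by (auto simp: min_le_iff_disj first_exceedance_le_iff space)
  moreover have "{\<omega>\<in>space (G k). c < X k \<omega>} \<in> sets (G n)" if "k \<le> n" for k
    using mono[OF that] adapted[of k] by auto
  ultimately show "{\<omega>\<in>space M. min (first_exceedance c X \<omega>) \<rho> \<le> enat n} \<in> sets (G n)"
    by auto
qed simp

lemma cmult_emeasure_sup_ge_le_stopped_integral:
  fixes X :: "nat \<Rightarrow> 'a \<Rightarrow> ennreal"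
  assumes "\<And>n. X n \<in> borel_measurable P" and "c < b"
  shows "c * emeasure P {\<omega>\<in>space P. b \<le> (SUP n\<in>{n. enat n \<le> \<rho>}. X n \<omega>)}
           \<le> (\<integral>\<^sup>+ \<omega>. stopped_at X (\<lambda>\<omega>. min (first_exceedance c X \<omega>) \<rho>) \<omega> \<partial>P)"
    (is "_ * emeasure P ?event \<le> _")
proof (rule cmult_emeasure_le_nn_integral)
  show "?event \<in> sets P"
    using assms(1) by measurable
next
  fix \<omega> assume "\<omega> \<in> ?event"
  then have "c < (SUP n\<in>{n. enat n \<le> \<rho>}. X n \<omega>)"
    using assms(2) by auto
  then obtain n where "enat n \<le> \<rho>" and "c < X n \<omega>"
    by (auto simp: less_SUP_iff)
  then show "c \<le> stopped_at X (\<lambda>\<omega>. min (first_exceedance c X \<omega>) \<rho>) \<omega>"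
    by (auto dest: less_stopped_at_capped_first_exceedance intro: less_imp_le)
qed

lemma asymptotic_e_process_limsup_maximal_le:
  assumes Ps: "prob_measures_on M Ps"
    and F: "filtration_sequence M F"
    and E: "asymptotic_e_process M Ps F r E"
    and "0 < y" and level: "ennreal (1 / y) < b"
  shows "limsup (\<lambda>m. SUP P\<in>Ps. emeasure P {\<omega>\<in>space P. b \<le> (SUP n\<in>{n. enat n \<le> r m}. E m n \<omega>)})
           \<le> ennreal y"
proof -
  let ?event = "\<lambda>m P. {\<omega>\<in>space P. b \<le> (SUP n\<in>{n. enat n \<le> r m}. E m n \<omega>)}"
  define \<tau> where "\<tau> m \<omega> = min (first_exceedance (ennreal (1 / y)) (E m) \<omega>) (r m)" for m \<omega>
  define g where "g m = (SUP P\<in>Ps. \<integral>\<^sup>+ \<omega>. stopped_at (E m) (\<tau> m) \<omega> \<partial>P)" for m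
  have sub: "subalgebra M (F m n)"
    and mono: "n \<le> n' \<Longrightarrow> sets (F m n) \<subseteq> sets (F m n')"
    and adapted: "E m n \<in> borel_measurable (F m n)" for m n n'
    using F E by (auto simp: filtration_sequence_def asymptotic_e_process_def adapted_seq_def)
  have "\<tau> m \<in> stopping_times_bounded M (r m) (F m) Ps" for m
    unfolding \<tau>_def by (rule capped_first_exceedance_stopping_time) (rule sub, erule mono, rule adapted)
  then have "\<tau> \<in> stopping_time_seqs M r F Ps"
    by (simp add: stopping_time_seqs_def)
  then have "limsup g \<le> 1"
    using E by (simp add: asymptotic_e_process_def g_def[abs_def])
  have "(SUP P\<in>Ps. emeasure P (?event m P)) \<le> ennreal y * g m" for m
  proof (rule SUP_least)
    fix P assume "P \<in> Ps"
    then have "sets P = sets M"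
      using Ps by (simp add: prob_measures_on_def)
    then have "E m n \<in> borel_measurable P" for n
      using measurable_from_subalg[OF sub adapted] measurable_cong_sets by blast
    have "emeasure P (?event m P) = ennreal y * (ennreal (1 / y) * emeasure P (?event m P))"
      using \<open>0 < y\<close> by (simp add: mult.assoc[symmetric] ennreal_mult[symmetric])
    also have "\<dots> \<le> ennreal y * (\<integral>\<^sup>+ \<omega>. stopped_at (E m) (\<tau> m) \<omega> \<partial>P)"
      unfolding \<tau>_def
      by (intro mult_left_mono cmult_emeasure_sup_ge_le_stopped_integral level) (fact, simp)
    also have "\<dots> \<le> ennreal y * g m"
      unfolding g_def using \<open>P \<in> Ps\<close> by (intro mult_left_mono SUP_upper) auto
    finally show "emeasure P (?event m P) \<le> ennreal y * g m" .
  qed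
  then have "limsup (\<lambda>m. SUP P\<in>Ps. emeasure P (?event m P))
      \<le> limsup (\<lambda>m. ennreal y * g m)"
    by (intro Limsup_mono) simp
  also have "\<dots> = ennreal y * limsup g"
    by (simp add: Limsup_ennreal_mult_left)
  also have "\<dots> \<le> ennreal y"
    using \<open>limsup g \<le> 1\<close> by (metis mult.right_neutral mult_left_mono zero_le)
  finally show ?thesis .
qed

theorem mainTheorem9:
  fixes M :: "'a measure" and Ps :: "'a measure set"
    and F :: "nat \<Rightarrow> nat \<Rightarrow> 'a measure" and r :: "nat \<Rightarrow> enat"
    and E :: "nat \<Rightarrow> nat \<Rightarrow> 'a \<Rightarrow> ennreal" and \<alpha> :: real
  assumes "prob_measures_on M Ps"
    and "filtration_sequence M F"
    and "asymptotic_e_process M Ps F r E"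
    and "0 < \<alpha>" and "\<alpha> < 1"
  shows "limsup (\<lambda>m. SUP P\<in>Ps.
            emeasure P {\<omega>\<in>space P. (SUP n\<in>{n. enat n \<le> r m}. E m n \<omega>) \<ge> ennreal (1 / \<alpha>)})
         \<le> ennreal \<alpha>"
proof (rule ennreal_le_epsilon, goal_cases)
  case (1 e)
  then have "0 < \<alpha> + e" and level: "ennreal (1 / (\<alpha> + e)) < ennreal (1 / \<alpha>)"
    using \<open>0 < \<alpha>\<close> by (simp_all add: ennreal_less_iff frac_less2)
  from asymptotic_e_process_limsup_maximal_le[OF assms(1-3) this] show ?case
    using \<open>0 < \<alpha>\<close> \<open>0 < e\<close> by (simp add: ennreal_plus)
qed

end
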